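(* On mixed graphs without directed cycles, the parameter $G\mapsto\mathrm{nd}(G)$ and the parameter $G\mapsto\mathrm{nd}(G^+)$ are incomparable (neither bounds the other), and likewise $G\mapsto\mathrm{cw}(G)$ and $G\mapsto\mathrm{cw}(G^+)$ are incomparable; here $\mathrm{nd}$ and $\mathrm{cw}$ denote neighborhood diversity and cliquewidth of the underlying undirected graph.
   Context: A mixed graph $G$ consists of a finite vertex set $V(G)$, a set $E(G)$ of undirected edges and a set $A(G)$ of directed arcs; it is simple and contains no directed cycle. The underlying undirected graph replaces every arc by an edge. The transitive closure $G^+$ is obtained by adding every arc $(u,v)$ such that $G$ has a directed path from $u$ to $v$, and removing any edge parallel to such an arc. For an undirected graph, $u,v$ have the same type if $N(u)\setminus\{v\}=N(v)\setminus\{u\}$ and neighborhood diversity is the number of types. A parameter $\alpha$ bounds $\beta$ if there is a computable $f$ with $\beta(G)\le f(\alpha(G))$ for all mixed graphs $G$ without directed cycles; two parameters are incomparable if neither bounds the other. *)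

theory Defs
  imports Main
begin

text \<open>A mixed graph on natural-number vertices: (vertex set, undirected edges, directed arcs).
  Undirected edges are two-element sets, arcs are ordered pairs.\<close>

type_synonym mgraph = "nat set \<times> nat set set \<times> (nat \<times> nat) set"

type_synonym ugraph = "nat set \<times> nat set set"

definition mixed_graph :: "mgraph \<Rightarrow> bool" where
  "mixed_graph G \<longleftrightarrow> (case G of (V, E, A) \<Rightarrow>
      finite V
    \<and> (\<forall>e\<in>E. \<exists>u v. u \<noteq> v \<and> u \<in> V \<and> v \<in> V \<and> e = {u, v})
    \<and> A \<subseteq> V \<times> V
    \<and> (\<forall>(u, v)\<in>A. u \<noteq> v \<and> {u, v} \<notin> E)
    \<and> acyclic A)"

definition underlying :: "mgraph \<Rightarrow> ugraph" where
  "underlying G = (case G of (V, E, A) \<Rightarrow> (V, E \<union> {{u, v} | u v. (u, v) \<in> A}))"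

definition tclosure :: "mgraph \<Rightarrow> mgraph" where
  "tclosure G = (case G of (V, E, A) \<Rightarrow>
      (V, E - {{u, v} | u v. (u, v) \<in> A\<^sup>+}, A\<^sup>+))"

definition nbhd :: "ugraph \<Rightarrow> nat \<Rightarrow> nat set" where
  "nbhd G u = {w. {u, w} \<in> snd G}"

definition same_type :: "ugraph \<Rightarrow> (nat \<times> nat) set" where
  "same_type G = {(u, v). u \<in> fst G \<and> v \<in> fst G \<and> nbhd G u - {v} = nbhd G v - {u}}"

definition nd :: "ugraph \<Rightarrow> nat" where
  "nd G = card (fst G // same_type G)"

datatype cwexp =
    CEmpty
  | CVert nat nat          (* create vertex v with label i *)
  | CUnion cwexp cwexp
  | CJoin nat nat cwexp    (* add all edges between labels i and j, i \<noteq> j *)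
  | CRelabel nat nat cwexp (* relabel i to j *)

fun cw_verts :: "cwexp \<Rightarrow> nat set" where
  "cw_verts CEmpty = {}"
| "cw_verts (CVert v i) = {v}"
| "cw_verts (CUnion e1 e2) = cw_verts e1 \<union> cw_verts e2"
| "cw_verts (CJoin i j e) = cw_verts e"
| "cw_verts (CRelabel i j e) = cw_verts e"

fun cw_lab :: "cwexp \<Rightarrow> nat \<Rightarrow> nat" where
  "cw_lab CEmpty = (\<lambda>_. 0)"
| "cw_lab (CVert v i) = (\<lambda>_. i)"
| "cw_lab (CUnion e1 e2) = (\<lambda>x. if x \<in> cw_verts e1 then cw_lab e1 x else cw_lab e2 x)"
| "cw_lab (CJoin i j e) = cw_lab e"
| "cw_lab (CRelabel i j e) = (\<lambda>x. if cw_lab e x = i then j else cw_lab e x)"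

fun cw_edges :: "cwexp \<Rightarrow> nat set set" where
  "cw_edges CEmpty = {}"
| "cw_edges (CVert v i) = {}"
| "cw_edges (CUnion e1 e2) = cw_edges e1 \<union> cw_edges e2"
| "cw_edges (CJoin i j e) = cw_edges e \<union>
     {{u, w} | u w. u \<in> cw_verts e \<and> w \<in> cw_verts e \<and> cw_lab e u = i \<and> cw_lab e w = j}"
| "cw_edges (CRelabel i j e) = cw_edges e"

fun cw_labels :: "cwexp \<Rightarrow> nat set" where
  "cw_labels CEmpty = {}"
| "cw_labels (CVert v i) = {i}"
| "cw_labels (CUnion e1 e2) = cw_labels e1 \<union> cw_labels e2"
| "cw_labels (CJoin i j e) = {i, j} \<union> cw_labels e"
| "cw_labels (CRelabel i j e) = {i, j} \<union> cw_labels e"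

fun cw_valid :: "cwexp \<Rightarrow> bool" where
  "cw_valid CEmpty = True"
| "cw_valid (CVert v i) = True"
| "cw_valid (CUnion e1 e2) = (cw_valid e1 \<and> cw_valid e2 \<and> cw_verts e1 \<inter> cw_verts e2 = {})"
| "cw_valid (CJoin i j e) = (i \<noteq> j \<and> cw_valid e)"
| "cw_valid (CRelabel i j e) = cw_valid e"

definition k_expression :: "nat \<Rightarrow> cwexp \<Rightarrow> bool" where
  "k_expression k e \<longleftrightarrow> cw_valid e \<and> cw_labels e \<subseteq> {..<k}"

definition cw :: "ugraph \<Rightarrow> nat" where
  "cw G = (LEAST k. \<exists>e. k_expression k e \<and> cw_verts e = fst G \<and> cw_edges e = snd G)"

definition bounds :: "(mgraph \<Rightarrow> nat) \<Rightarrow> (mgraph \<Rightarrow> nat) \<Rightarrow> bool" where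
  "bounds \<alpha> \<beta> \<longleftrightarrow> (\<exists>f :: nat \<Rightarrow> nat. \<forall>G. mixed_graph G \<longrightarrow> \<beta> G \<le> f (\<alpha> G))"

definition incomparable :: "(mgraph \<Rightarrow> nat) \<Rightarrow> (mgraph \<Rightarrow> nat) \<Rightarrow> bool" where
  "incomparable \<alpha> \<beta> \<longleftrightarrow> \<not> bounds \<alpha> \<beta> \<and> \<not> bounds \<beta> \<alpha>"

end

(*
  Both separations rest on one core graph: two copies (sides) of an n x n board, a vertex of one
  side being adjacent to the vertices of the other side on its row or on its column.  Any two core
  vertices are told apart by at least n - 2 others, which forces 2 n^2 neighbourhood types and, by
  a balanced-subexpression argument, cliquewidth at least (n - 2) / 2 in every graph containing
  the core as an induced subgraph.

  Placing the core on the even vertices of a directed Hamiltonian path gives a mixed graph whose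
  underlying graph contains the core while its transitive closure is complete.  Conversely,
  joining every core vertex to 2 n hubs, one per row and one per column, with arcs from the first
  side into its hubs and from the hubs into the second side, gives a complete bipartite underlying
  graph whose transitive closure induces the core.
*)
theory Submission
  imports Defs
begin

definition adjacent :: "ugraph \<Rightarrow> nat \<Rightarrow> nat \<Rightarrow> bool" where
  "adjacent G u w \<longleftrightarrow> {u, w} \<in> snd G"

definition separators :: "('a \<Rightarrow> 'a \<Rightarrow> bool) \<Rightarrow> 'a set \<Rightarrow> 'a \<Rightarrow> 'a \<Rightarrow> 'a set" where
  "separators R T u v = {w \<in> T - {u, v}. R u w \<noteq> R v w}"

lemma card_separators_image:
  assumes "inj_on g T" "x \<in> T" "y \<in> T"
    and "\<And>a b. a \<in> T \<Longrightarrow> b \<in> T \<Longrightarrow> S (g a) (g b) = R a b"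
  shows "card (separators S (g ` T) (g x) (g y)) = card (separators R T x y)"
proof -
  have "separators S (g ` T) (g x) (g y) = g ` separators R T x y"
    using assms by (auto simp: separators_def inj_on_eq_iff)
  moreover have "inj_on g (separators R T x y)"
    using assms(1) by (rule inj_on_subset) (auto simp: separators_def)
  ultimately show ?thesis by (simp add: card_image)
qed

definition simple_ugraph :: "ugraph \<Rightarrow> bool" where
  "simple_ugraph G \<longleftrightarrow> finite (fst G)
     \<and> (\<forall>e\<in>snd G. \<exists>u v. u \<noteq> v \<and> u \<in> fst G \<and> v \<in> fst G \<and> e = {u, v})"

definition complete_ugraph :: "nat set \<Rightarrow> ugraph" where
  "complete_ugraph V = (V, {{a, b} |a b. a \<in> V \<and> b \<in> V \<and> a \<noteq> b})"

definition complete_bipartite :: "nat set \<Rightarrow> nat set \<Rightarrow> ugraph" where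
  "complete_bipartite P Q = (P \<union> Q, {{a, b} |a b. a \<in> P \<and> b \<in> Q})"

section \<open>Neighborhood diversity\<close>

lemma card_le_nd_if_separated:
  assumes "finite (fst G)" "T \<subseteq> fst G"
    and "\<And>u v. u \<in> T \<Longrightarrow> v \<in> T \<Longrightarrow> u \<noteq> v \<Longrightarrow> separators (adjacent G) T u v \<noteq> {}"
  shows "card T \<le> nd G"
proof -
  have "inj_on (\<lambda>u. same_type G `` {u}) T"
  proof (rule inj_onI, rule ccontr)
    fix u v
    assume "u \<in> T" "v \<in> T" "u \<noteq> v" and same: "same_type G `` {u} = same_type G `` {v}"
    then obtain w where w: "w \<in> separators (adjacent G) T u v" using assms(3) by blast
    have "v \<in> same_type G `` {v}" using \<open>v \<in> T\<close> assms(2) by (auto simp: same_type_def)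
    then have "(u, v) \<in> same_type G" using same by (metis Image_singleton_iff)
    then have "nbhd G u - {v} = nbhd G v - {u}" by (simp add: same_type_def)
    then show False using w by (auto simp: separators_def adjacent_def nbhd_def)
  qed
  moreover have "(\<lambda>u. same_type G `` {u}) ` T \<subseteq> fst G // same_type G"
    using assms(2) by (auto intro: quotientI)
  moreover have "finite (fst G // same_type G)"
    using assms(1) by (simp add: quotient_def)
  ultimately show ?thesis unfolding nd_def by (rule card_inj_on_le)
qed

lemma nd_le_card_if_classes_in:
  assumes "finite C" "\<And>x. x \<in> fst G \<Longrightarrow> same_type G `` {x} \<in> C"
  shows "nd G \<le> card C"
  unfolding nd_def using assms by (intro card_mono) (auto simp: quotient_def)

lemma nd_complete_ugraph: "nd (complete_ugraph V) \<le> 1"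
proof -
  have "nbhd (complete_ugraph V) x = V - {x}" if "x \<in> V" for x
    using that by (auto simp: nbhd_def complete_ugraph_def doubleton_eq_iff)
  then have "same_type (complete_ugraph V) `` {x} = V" if "x \<in> V" for x
    using that by (auto simp: same_type_def complete_ugraph_def)
  then have "nd (complete_ugraph V) \<le> card {V}"
    by (intro nd_le_card_if_classes_in) (auto simp: complete_ugraph_def)
  then show ?thesis by simp
qed

lemma nd_complete_bipartite:
  assumes "P \<inter> Q = {}" "2 \<le> card P" "2 \<le> card Q"
  shows "nd (complete_bipartite P Q) \<le> 2"
proof -
  let ?G = "complete_bipartite P Q"
  have nonsingleton: "A - {x} \<noteq> {}" if "2 \<le> card A" for A and x :: nat
  proof
    assume "A - {x} = {}"
    then have "card A \<le> card {x}" by (intro card_mono) auto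
    then show False using that by simp
  qed
  have nbhd_P: "nbhd ?G x = Q" if "x \<in> P" for x
    using that assms(1) by (auto simp: nbhd_def complete_bipartite_def doubleton_eq_iff)
  have nbhd_Q: "nbhd ?G x = P" if "x \<in> Q" for x
    using that assms(1) by (auto simp: nbhd_def complete_bipartite_def doubleton_eq_iff)
  have sides_differ: "P - {x} \<noteq> Q - {y}" for x y
    using nonsingleton[OF assms(2)] assms(1) by blast
  have vertices: "fst ?G = P \<union> Q" by (simp add: complete_bipartite_def)
  have not_Q: "z \<notin> Q" if "z \<in> P" for z using that assms(1) by blast
  have not_P: "z \<notin> P" if "z \<in> Q" for z using that assms(1) by blast
  have "same_type ?G `` {x} \<in> {P, Q}" if "x \<in> P \<union> Q" for x
  proof -
    have same_side: "(x, y) \<in> same_type ?G \<longleftrightarrow> (y \<in> P \<longleftrightarrow> x \<in> P)" if "y \<in> P \<union> Q" for y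
      using \<open>x \<in> P \<union> Q\<close> that sides_differ[of x y] sides_differ[of y x]
      by (cases "x \<in> P"; cases "y \<in> P")
        (simp_all add: same_type_def vertices nbhd_P nbhd_Q not_P not_Q)
    have "same_type ?G `` {x} \<subseteq> P \<union> Q" by (auto simp: same_type_def vertices)
    then have "same_type ?G `` {x} = {y \<in> P \<union> Q. y \<in> P \<longleftrightarrow> x \<in> P}"
      using same_side by blast
    then show ?thesis using not_P by auto
  qed
  then have "nd ?G \<le> card {P, Q}"
    by (intro nd_le_card_if_classes_in) (auto simp: complete_bipartite_def)
  also have "\<dots> \<le> 2" by (simp add: card_insert_le_m1)
  finally show ?thesis .
qed

section \<open>Cliquewidth\<close>

fun subexprs :: "cwexp \<Rightarrow> cwexp set" where
  "subexprs CEmpty = {CEmpty}"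
| "subexprs (CVert v i) = {CVert v i}"
| "subexprs (CUnion e1 e2) = insert (CUnion e1 e2) (subexprs e1 \<union> subexprs e2)"
| "subexprs (CJoin i j e) = insert (CJoin i j e) (subexprs e)"
| "subexprs (CRelabel i j e) = insert (CRelabel i j e) (subexprs e)"

lemma finite_cw_verts: "finite (cw_verts e)"
  by (induction e) auto

lemma cw_edges_subset_verts: "x \<in> cw_edges e \<Longrightarrow> x \<subseteq> cw_verts e"
  by (induction e arbitrary: x) auto

lemma cw_lab_in_labels: "v \<in> cw_verts e \<Longrightarrow> cw_lab e v \<in> cw_labels e"
  by (induction e) auto

lemma subexprs_verts_subset: "e' \<in> subexprs e \<Longrightarrow> cw_verts e' \<subseteq> cw_verts e"
  by (induction e) auto

lemma subexprs_labels_subset: "e' \<in> subexprs e \<Longrightarrow> cw_labels e' \<subseteq> cw_labels e"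
  by (induction e) auto

lemma cw_lab_eq_of_subexpr:
  assumes "cw_valid e" "e' \<in> subexprs e" "u \<in> cw_verts e'" "v \<in> cw_verts e'"
    and "cw_lab e' u = cw_lab e' v"
  shows "cw_lab e u = cw_lab e v"
  using assms
proof (induction e)
  case (CUnion e1 e2)
  consider "e' = CUnion e1 e2" | "e' \<in> subexprs e1" | "e' \<in> subexprs e2"
    using CUnion.prems(2) by auto
  then show ?case
  proof cases
    case 2
    then have "u \<in> cw_verts e1" "v \<in> cw_verts e1"
      using subexprs_verts_subset CUnion.prems by auto
    then show ?thesis using CUnion 2 by auto
  next
    case 3
    then have "u \<in> cw_verts e2" "v \<in> cw_verts e2"
      using subexprs_verts_subset CUnion.prems by auto
    moreover have "u \<notin> cw_verts e1" "v \<notin> cw_verts e1"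
      using calculation CUnion.prems(1) by auto
    ultimately show ?thesis using CUnion 3 by auto
  qed (use CUnion.prems in simp)
qed auto

lemma same_label_twins_outside_subexpr:
  assumes "cw_valid e" "e' \<in> subexprs e" "u \<in> cw_verts e'" "v \<in> cw_verts e'"
    and "cw_lab e' u = cw_lab e' v" "w \<in> cw_verts e" "w \<notin> cw_verts e'"
  shows "{u, w} \<in> cw_edges e \<longleftrightarrow> {v, w} \<in> cw_edges e"
  using assms
proof (induction e)
  case (CUnion e1 e2)
  then have "e' \<in> subexprs e1 \<or> e' \<in> subexprs e2" by auto
  then show ?case
  proof
    assume "e' \<in> subexprs e1"
    then have "u \<in> cw_verts e1" "v \<in> cw_verts e1"
      using subexprs_verts_subset CUnion.prems by auto
    then have "u \<notin> cw_verts e2" "v \<notin> cw_verts e2" using CUnion.prems(1) by auto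
    then show ?thesis
      using CUnion \<open>e' \<in> subexprs e1\<close> cw_edges_subset_verts[of _ e1] cw_edges_subset_verts[of _ e2]
      by (cases "w \<in> cw_verts e1") auto
  next
    assume "e' \<in> subexprs e2"
    then have "u \<in> cw_verts e2" "v \<in> cw_verts e2"
      using subexprs_verts_subset CUnion.prems by auto
    then have "u \<notin> cw_verts e1" "v \<notin> cw_verts e1" using CUnion.prems(1) by auto
    then show ?thesis
      using CUnion \<open>e' \<in> subexprs e2\<close> cw_edges_subset_verts[of _ e1] cw_edges_subset_verts[of _ e2]
      by (cases "w \<in> cw_verts e2") auto
  qed
next
  case (CJoin i j e0)
  then have sub: "e' \<in> subexprs e0" by auto
  then have "u \<in> cw_verts e0" "v \<in> cw_verts e0"
    using subexprs_verts_subset CJoin.prems by auto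
  moreover have "cw_lab e0 u = cw_lab e0 v"
    using cw_lab_eq_of_subexpr[of e0 e' u v] CJoin.prems sub by auto
  moreover have "w \<noteq> u" "w \<noteq> v" using CJoin.prems sub by auto
  moreover have "w \<in> cw_verts e0" using CJoin.prems by simp
  ultimately have "{u, w} \<in> {{x, y} |x y. x \<in> cw_verts e0 \<and> y \<in> cw_verts e0 \<and> cw_lab e0 x = i \<and> cw_lab e0 y = j}
      \<longleftrightarrow> {v, w} \<in> {{x, y} |x y. x \<in> cw_verts e0 \<and> y \<in> cw_verts e0 \<and> cw_lab e0 x = i \<and> cw_lab e0 y = j}"
    by (auto simp: doubleton_eq_iff) (blast+)
  then show ?case using CJoin sub by auto
qed auto

lemma ex_subexpr_meeting_between:
  assumes "2 \<le> m" "m \<le> card (cw_verts e \<inter> T)"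
  shows "\<exists>e'\<in>subexprs e. m \<le> card (cw_verts e' \<inter> T) \<and> card (cw_verts e' \<inter> T) \<le> 2 * m - 2"
  using assms(2)
proof (induction e)
  case (CVert v i)
  have "card (cw_verts (CVert v i) \<inter> T) \<le> card {v}" by (intro card_mono) auto
  then show ?case using CVert assms(1) by simp
next
  case (CUnion e1 e2)
  have "card (cw_verts (CUnion e1 e2) \<inter> T) \<le> card (cw_verts e1 \<inter> T) + card (cw_verts e2 \<inter> T)"
    by (simp add: Int_Un_distrib2 card_Un_le)
  then show ?case using CUnion by force
qed auto

(* A subexpression meeting T in m to 2 m - 2 vertices gives them pairwise distinct labels: equally
   labelled vertices of a subexpression are twins towards everything outside it, whereas two
   vertices of T have 2 m separators, at most 2 m - 4 of which lie inside. *)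
lemma k_expression_ge_if_separated:
  assumes e: "k_expression k e" and T: "T \<subseteq> cw_verts e" and m: "2 \<le> m" "m \<le> card T"
    and sep: "\<And>u v. u \<in> T \<Longrightarrow> v \<in> T \<Longrightarrow> u \<noteq> v
      \<Longrightarrow> 2 * m \<le> card (separators (\<lambda>u w. {u, w} \<in> cw_edges e) T u v)"
  shows "m \<le> k"
proof -
  have "finite T" using T finite_cw_verts by (rule finite_subset)
  obtain e' where e': "e' \<in> subexprs e"
    and lower: "m \<le> card (cw_verts e' \<inter> T)" and upper: "card (cw_verts e' \<inter> T) \<le> 2 * m - 2"
    using ex_subexpr_meeting_between[OF m(1), of e T] m(2) T by (auto simp: Int_absorb1)
  define S where "S = cw_verts e' \<inter> T"
  have "inj_on (cw_lab e') S"
  proof (rule inj_onI, rule ccontr)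
    fix u v assume u: "u \<in> S" and v: "v \<in> S" and same: "cw_lab e' u = cw_lab e' v" and "u \<noteq> v"
    let ?D = "separators (\<lambda>u w. {u, w} \<in> cw_edges e) T u v"
    have "\<not> ?D \<subseteq> S - {u, v}"
    proof
      assume "?D \<subseteq> S - {u, v}"
      then have "card ?D \<le> card (S - {u, v})"
        using \<open>finite T\<close> by (intro card_mono) (auto simp: S_def)
      also have "\<dots> = card S - 2"
        using u v \<open>u \<noteq> v\<close> \<open>finite T\<close> by (simp add: S_def card_Diff_subset)
      finally show False using sep[of u v] u v \<open>u \<noteq> v\<close> upper m(1) by (auto simp: S_def)
    qed
    then obtain w where w: "w \<in> ?D" "w \<notin> cw_verts e'" by (auto simp: separators_def S_def)
    then have "w \<in> cw_verts e" using T by (auto simp: separators_def)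
    with w show False
      using same_label_twins_outside_subexpr[OF _ e' _ _ same] e u v
      by (auto simp: separators_def k_expression_def S_def)
  qed
  moreover have "cw_lab e' ` S \<subseteq> {..<k}"
    using cw_lab_in_labels subexprs_labels_subset[OF e'] e by (auto simp: S_def k_expression_def)
  ultimately have "card S \<le> k" by (metis card_image card_lessThan card_mono finite_lessThan)
  then show ?thesis using lower by (simp add: S_def)
qed

lemma cw_edges_CJoin_classes:
  assumes "\<And>u. u \<in> cw_verts e \<Longrightarrow> cw_lab e u = i \<longleftrightarrow> u \<in> A"
    and "\<And>u. u \<in> cw_verts e \<Longrightarrow> cw_lab e u = j \<longleftrightarrow> u \<in> B"
    and "A \<subseteq> cw_verts e" "B \<subseteq> cw_verts e"
  shows "cw_edges (CJoin i j e) = cw_edges e \<union> {{a, b} |a b. a \<in> A \<and> b \<in> B}"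
  using assms by auto blast+

lemma ex_edgeless_expression:
  assumes "finite V"
  shows "\<exists>e. cw_valid e \<and> cw_verts e = V \<and> cw_edges e = {} \<and> cw_labels e = f ` V
    \<and> (\<forall>v\<in>V. cw_lab e v = f v)"
  using assms
proof (induction V rule: finite_induct)
  case empty
  show ?case by (intro exI[of _ CEmpty]) simp
next
  case (insert x V)
  then obtain e where "cw_valid e \<and> cw_verts e = V \<and> cw_edges e = {} \<and> cw_labels e = f ` V
    \<and> (\<forall>v\<in>V. cw_lab e v = f v)" by blast
  with insert.hyps show ?case by (intro exI[of _ "CUnion (CVert x (f x)) e"]) auto
qed

lemma ex_expression_of_simple_ugraph:
  assumes "simple_ugraph G"
  shows "\<exists>k e. k_expression k e \<and> cw_verts e = fst G \<and> cw_edges e = snd G"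
proof -
  obtain V E where G: "G = (V, E)" by fastforce
  have V: "finite V" and E: "\<And>x. x \<in> E \<Longrightarrow> \<exists>u v. u \<noteq> v \<and> u \<in> V \<and> v \<in> V \<and> x = {u, v}"
    using assms by (auto simp: simple_ugraph_def G)
  have "finite E" using V E by (intro finite_subset[of E "Pow V"]) auto
  have "\<exists>e. cw_valid e \<and> cw_verts e = V \<and> cw_edges e = F \<and> cw_labels e \<subseteq> V \<and> (\<forall>v\<in>V. cw_lab e v = v)"
    if "F \<subseteq> E" for F
    using finite_subset[OF that \<open>finite E\<close>] that
  proof (induction F rule: finite_induct)
    case empty
    show ?case using ex_edgeless_expression[OF V, of id] by auto
  next
    case (insert x F)
    then obtain e where e: "cw_valid e" "cw_verts e = V" "cw_edges e = F" "cw_labels e \<subseteq> V"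
      "\<forall>v\<in>V. cw_lab e v = v" by blast
    obtain u v where "u \<noteq> v" "u \<in> V" "v \<in> V" "x = {u, v}" using E insert.prems by blast
    moreover have "cw_edges (CJoin u v e) = insert x F"
      using e calculation by (subst cw_edges_CJoin_classes[where A = "{u}" and B = "{v}"]) auto
    ultimately show ?case using e by (intro exI[of _ "CJoin u v e"]) auto
  qed
  then obtain e where "cw_valid e" "cw_verts e = V" "cw_edges e = E" "cw_labels e \<subseteq> V" by blast
  moreover obtain k where "\<forall>v\<in>V. v < k" using V finite_nat_set_iff_bounded by blast
  ultimately show ?thesis by (auto simp: k_expression_def G)
qed

lemma cw_le_of_expression:
  assumes "k_expression k e" "cw_verts e = fst G" "cw_edges e = snd G"
  shows "cw G \<le> k"
  unfolding cw_def by (rule Least_le) (use assms in auto)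

lemma le_cw_if_separated:
  assumes "simple_ugraph G" "T \<subseteq> fst G" "2 \<le> m" "m \<le> card T"
    and "\<And>u v. u \<in> T \<Longrightarrow> v \<in> T \<Longrightarrow> u \<noteq> v \<Longrightarrow> 2 * m \<le> card (separators (adjacent G) T u v)"
  shows "m \<le> cw G"
  unfolding cw_def
proof (rule LeastI2_ex)
  show "\<exists>k e. k_expression k e \<and> cw_verts e = fst G \<and> cw_edges e = snd G"
    using assms(1) by (rule ex_expression_of_simple_ugraph)
  fix k assume "\<exists>e. k_expression k e \<and> cw_verts e = fst G \<and> cw_edges e = snd G"
  then obtain e where e: "k_expression k e" "cw_verts e = fst G" "cw_edges e = snd G" by blast
  have adj: "adjacent G = (\<lambda>u w. {u, w} \<in> cw_edges e)" using e(3) by (auto simp: adjacent_def fun_eq_iff)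
  show "m \<le> k"
  proof (rule k_expression_ge_if_separated[OF e(1) _ assms(3,4)])
    show "T \<subseteq> cw_verts e" using assms(2) e(2) by simp
    fix u v assume "u \<in> T" "v \<in> T" "u \<noteq> v"
    then show "2 * m \<le> card (separators (\<lambda>u w. {u, w} \<in> cw_edges e) T u v)"
      using assms(5) unfolding adj by simp
  qed
qed

lemma cw_complete_ugraph:
  assumes "finite V"
  shows "cw (complete_ugraph V) \<le> 2"
proof -
  have "\<exists>e. cw_valid e \<and> cw_verts e = V \<and> cw_edges e = snd (complete_ugraph V) \<and> cw_labels e \<subseteq> {0, 1}
    \<and> (\<forall>v\<in>V. cw_lab e v = 0)"
    using assms
  proof (induction V rule: finite_induct)
    case empty
    show ?case by (intro exI[of _ CEmpty]) (simp add: complete_ugraph_def)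
  next
    case (insert x V)
    then obtain e where e: "cw_valid e" "cw_verts e = V" "cw_edges e = snd (complete_ugraph V)"
      "cw_labels e \<subseteq> {0, 1}" "\<forall>v\<in>V. cw_lab e v = 0" by blast
    let ?e = "CRelabel 1 0 (CJoin 0 1 (CUnion (CVert x 1) e))"
    have "cw_edges ?e = snd (complete_ugraph V) \<union> {{a, b} |a b. a \<in> V \<and> b \<in> {x}}"
      using e insert.hyps(2) by (subst cw_edges.simps, subst cw_edges_CJoin_classes) auto
    also have "\<dots> = snd (complete_ugraph (insert x V))"
      using insert.hyps by (auto simp: complete_ugraph_def)
    finally show ?case using e insert.hyps by (intro exI[of _ ?e]) auto
  qed
  then obtain e where "cw_valid e" "cw_verts e = V" "cw_edges e = snd (complete_ugraph V)"
    "cw_labels e \<subseteq> {0, 1}" by blast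
  then show ?thesis
    by (intro cw_le_of_expression[of 2 e]) (auto simp: k_expression_def complete_ugraph_def)
qed

lemma cw_complete_bipartite:
  assumes "finite P" "finite Q" "P \<inter> Q = {}"
  shows "cw (complete_bipartite P Q) \<le> 2"
proof -
  obtain eP where eP: "cw_valid eP" "cw_verts eP = P" "cw_edges eP = {}" "cw_labels eP \<subseteq> {0}"
    "\<forall>v\<in>P. cw_lab eP v = 0"
    using ex_edgeless_expression[OF assms(1), of "\<lambda>_. 0"] by auto
  obtain eQ where eQ: "cw_valid eQ" "cw_verts eQ = Q" "cw_edges eQ = {}" "cw_labels eQ \<subseteq> {1}"
    "\<forall>v\<in>Q. cw_lab eQ v = 1"
    using ex_edgeless_expression[OF assms(2), of "\<lambda>_. 1"] by auto
  let ?e = "CJoin 0 1 (CUnion eP eQ)"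
  have "k_expression 2 ?e"
    using eP eQ assms(3) by (auto simp: k_expression_def)
  moreover have "cw_verts ?e = fst (complete_bipartite P Q)"
    using eP(2) eQ(2) by (simp add: complete_bipartite_def)
  moreover have "cw_edges ?e = snd (complete_bipartite P Q)"
  proof -
    have "cw_lab (CUnion eP eQ) u = 0 \<longleftrightarrow> u \<in> P" "cw_lab (CUnion eP eQ) u = 1 \<longleftrightarrow> u \<in> Q"
      if "u \<in> cw_verts (CUnion eP eQ)" for u
      using that eP(2,5) eQ(2,5) assms(3) by auto
    then show ?thesis
      using eP(2,3) eQ(2,3)
      by (subst cw_edges_CJoin_classes[where A = P and B = Q]) (simp_all add: complete_bipartite_def)
  qed
  ultimately show ?thesis by (rule cw_le_of_expression)
qed

section \<open>The grid graph\<close>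

definition grid :: "nat \<Rightarrow> (nat \<times> nat \<times> nat) set" where
  "grid n = {..<2} \<times> {..<n} \<times> {..<n}"

fun grid_adj :: "nat \<times> nat \<times> nat \<Rightarrow> nat \<times> nat \<times> nat \<Rightarrow> bool" where
  "grid_adj (s, i, j) (s', i', j') \<longleftrightarrow> s \<noteq> s' \<and> (i = i' \<or> j = j')"

lemma grid_adj_sym: "grid_adj x y = grid_adj y x"
  by (cases x; cases y) auto

lemma grid_adj_irrefl: "\<not> grid_adj x x"
  by (cases x) auto

lemma card_grid: "card (grid n) = 2 * n * n"
  by (simp add: grid_def card_cartesian_product)

lemma card_grid_separators:
  assumes "x \<in> grid n" "y \<in> grid n" "x \<noteq> y"
  shows "n - 2 \<le> card (separators grid_adj (grid n) x y)"
proof -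
  obtain s i j s' i' j' where x: "x = (s, i, j)" and y: "y = (s', i', j')" by (cases x, cases y) auto
  have coords: "s < 2" "i < n" "j < n" "s' < 2" "i' < n" "j' < n"
    using assms(1,2) by (auto simp: grid_def x y)
  have flip: "1 - s \<noteq> s" using coords(1) by arith
  have many: "n - 2 \<le> card (separators grid_adj (grid n) x y)"
    if "inj f" "f ` ({..<n} - {a, b}) \<subseteq> separators grid_adj (grid n) x y" for f a b
  proof -
    have "card {..<n} - card {a, b} \<le> card ({..<n} - {a, b})" by (rule diff_card_le_card_Diff) simp
    moreover have "card {a, b} \<le> 2" by (simp add: card_insert_le_m1)
    moreover have "card ({..<n} - {a, b}) = card (f ` ({..<n} - {a, b}))"
      using that(1) by (simp add: card_image inj_on_subset)
    moreover have "card (f ` ({..<n} - {a, b})) \<le> card (separators grid_adj (grid n) x y)"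
      using that(2) by (intro card_mono) (auto simp: separators_def grid_def)
    ultimately show ?thesis by simp
  qed
  consider "s = s'" "i = i'" | "s = s'" "i \<noteq> i'" | "s \<noteq> s'" by blast
  then show ?thesis
  proof cases
    case 1
    with assms(3) have "j \<noteq> j'" by (simp add: x y)
    show ?thesis
      by (rule many[of "\<lambda>a. (1 - s, a, j)" i i])
        (use 1 \<open>j \<noteq> j'\<close> coords flip in \<open>auto simp: inj_def separators_def grid_def x y\<close>)
  next
    case 2
    show ?thesis
      by (rule many[of "\<lambda>a. (1 - s, i, a)" j j'])
        (use 2 coords flip in \<open>auto simp: inj_def separators_def grid_def x y\<close>)
  next
    case 3
    show ?thesis
      by (rule many[of "\<lambda>a. (s', i, a)" j' j'])
        (use 3 coords in \<open>auto simp: inj_def separators_def grid_def x y\<close>)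
  qed
qed

lemma mult_add_eq_iff:
  fixes a b a' b' n :: nat
  assumes "b < n" "b' < n"
  shows "a * n + b = a' * n + b' \<longleftrightarrow> a = a' \<and> b = b'"
proof
  assume eq: "a * n + b = a' * n + b'"
  have "(a * n + b) mod n = b" "(a' * n + b') mod n = b'" using assms by simp_all
  moreover have "(a * n + b) div n = a" "(a' * n + b') div n = a'" using assms by simp_all
  ultimately show "a = a' \<and> b = b'" using eq by metis
qed simp

definition grid_code :: "nat \<Rightarrow> nat \<times> nat \<times> nat \<Rightarrow> nat" where
  "grid_code n = (\<lambda>(s, i, j). (s * n + i) * n + j)"

lemma inj_on_grid_code: "inj_on (grid_code n) (grid n)"
  by (rule inj_onI) (auto simp: grid_def grid_code_def mult_add_eq_iff)

lemma grid_code_less: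
  assumes "x \<in> grid n"
  shows "grid_code n x < 2 * n * n"
proof -
  obtain s i j where x: "x = (s, i, j)" "s < 2" "i < n" "j < n" using assms by (auto simp: grid_def)
  have "(s * n + i) * n + j < (s * n + i + 1) * n" using x(4) by simp
  also have "\<dots> \<le> (2 * n) * n" using x(2,3) by (intro mult_right_mono) (auto simp: less_2_cases_iff)
  finally show ?thesis by (simp add: x(1) grid_code_def)
qed

definition embeds_grid :: "nat \<Rightarrow> (nat \<times> nat \<times> nat \<Rightarrow> nat) \<Rightarrow> ugraph \<Rightarrow> bool" where
  "embeds_grid n g G \<longleftrightarrow> inj_on g (grid n) \<and> g ` grid n \<subseteq> fst G
     \<and> (\<forall>x\<in>grid n. \<forall>y\<in>grid n. adjacent G (g x) (g y) \<longleftrightarrow> grid_adj x y)"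

lemma card_separators_of_embeds_grid:
  assumes "embeds_grid n g G" "u \<in> g ` grid n" "v \<in> g ` grid n" "u \<noteq> v"
  shows "n - 2 \<le> card (separators (adjacent G) (g ` grid n) u v)"
proof -
  obtain x y where "x \<in> grid n" "y \<in> grid n" "u = g x" "v = g y" using assms(2,3) by blast
  moreover from this have "x \<noteq> y" using assms(4) by blast
  ultimately show ?thesis
    using assms(1) card_grid_separators card_separators_image[of g "grid n" x y "adjacent G" grid_adj]
    by (simp add: embeds_grid_def)
qed

lemma nd_ge_of_embeds_grid:
  assumes "finite (fst G)" "embeds_grid n g G" "3 \<le> n"
  shows "n \<le> nd G"
proof -
  have "card (g ` grid n) \<le> nd G"
  proof (rule card_le_nd_if_separated)
    show "g ` grid n \<subseteq> fst G" using assms(2) by (simp add: embeds_grid_def)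
    fix u v assume "u \<in> g ` grid n" "v \<in> g ` grid n" "u \<noteq> v"
    then have "n - 2 \<le> card (separators (adjacent G) (g ` grid n) u v)"
      by (rule card_separators_of_embeds_grid[OF assms(2)])
    then show "separators (adjacent G) (g ` grid n) u v \<noteq> {}" using assms(3) by auto
  qed (rule assms(1))
  moreover have "card (g ` grid n) = 2 * n * n"
    using assms(2) by (simp add: embeds_grid_def card_image card_grid)
  moreover have "n \<le> 2 * n * n" by (cases n) auto
  ultimately show ?thesis by linarith
qed

lemma cw_ge_of_embeds_grid:
  assumes "simple_ugraph G" "embeds_grid (2 * m + 2) g G" "2 \<le> m"
  shows "m \<le> cw G"
proof (rule le_cw_if_separated[OF assms(1) _ assms(3)])
  let ?n = "2 * m + 2"
  show "g ` grid ?n \<subseteq> fst G" using assms(2) by (simp add: embeds_grid_def)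
  have "card (g ` grid ?n) = 2 * ?n * ?n"
    using assms(2) by (simp add: embeds_grid_def card_image card_grid)
  then show "m \<le> card (g ` grid ?n)" by simp
  fix u v assume "u \<in> g ` grid ?n" "v \<in> g ` grid ?n" "u \<noteq> v"
  from card_separators_of_embeds_grid[OF assms(2) this]
  show "2 * m \<le> card (separators (adjacent G) (g ` grid ?n) u v)" by simp
qed

lemma underlying_tclosure:
  "underlying (tclosure (V, E, A)) = (V, E \<union> {{u, v} |u v. (u, v) \<in> A\<^sup>+})"
  by (auto simp: underlying_def tclosure_def)

lemma simple_ugraph_underlying:
  assumes "mixed_graph G"
  shows "simple_ugraph (underlying G)" "simple_ugraph (underlying (tclosure G))"
proof -
  obtain V E A where G: "G = (V, E, A)" by (cases G) auto
  have V: "finite V" and E: "\<forall>e\<in>E. \<exists>u v. u \<noteq> v \<and> u \<in> V \<and> v \<in> V \<and> e = {u, v}"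
    and A: "A \<subseteq> V \<times> V" "acyclic A"
    using assms by (auto simp: mixed_graph_def G)
  have with_arcs: "simple_ugraph (V, E \<union> {{u, v} |u v. (u, v) \<in> R})"
    if "R \<subseteq> A\<^sup>+" for R
  proof -
    have "u \<noteq> v \<and> u \<in> V \<and> v \<in> V" if "(u, v) \<in> A\<^sup>+" for u v
      using that A trancl_subset_Sigma[OF A(1)] by (auto simp: acyclic_def)
    then show ?thesis using that V E by (auto simp: simple_ugraph_def) blast
  qed
  show "simple_ugraph (underlying G)"
    using with_arcs[OF subsetI[OF r_into_trancl']] by (simp add: G underlying_def)
  show "simple_ugraph (underlying (tclosure G))"
    using with_arcs[of "A\<^sup>+"] by (simp add: G underlying_tclosure)
qed

lemma doubleton_in_pairs_iff: "{a, b} \<in> {{u, v} |u v. (u, v) \<in> R} \<longleftrightarrow> (a, b) \<in> R \<or> (b, a) \<in> R"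
  by (auto simp: doubleton_eq_iff)

lemma trancl_eq_Un_relcomp:
  assumes "r O r O r = {}"
  shows "r\<^sup>+ = r \<union> r O r"
proof (intro equalityI subrelI)
  fix x z assume "(x, z) \<in> r\<^sup>+"
  then show "(x, z) \<in> r \<union> r O r"
    by (induction rule: trancl_induct) (use assms in \<open>auto simp: O_assoc\<close>)
qed auto

section \<open>A directed path over the grid\<close>

definition successor_arcs :: "nat \<Rightarrow> (nat \<times> nat) set" where
  "successor_arcs N = {(v, Suc v) |v. Suc v < N}"

lemma trancl_successor_arcs: "(successor_arcs N)\<^sup>+ = {(u, v). u < v \<and> v < N}"
proof (intro equalityI subrelI)
  fix u v assume "(u, v) \<in> (successor_arcs N)\<^sup>+"
  then show "(u, v) \<in> {(u, v). u < v \<and> v < N}"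
    by (induction rule: trancl_induct) (auto simp: successor_arcs_def)
next
  fix u v assume "(u, v) \<in> {(u, v). u < v \<and> v < N}"
  then have "u < v" "v < N" by auto
  then show "(u, v) \<in> (successor_arcs N)\<^sup>+"
  proof (induction v)
    case (Suc v)
    have "(v, Suc v) \<in> successor_arcs N" using Suc.prems by (auto simp: successor_arcs_def)
    then show ?case
      using Suc by (cases "u = v") (auto intro: trancl_into_trancl)
  qed simp
qed

(* The core sits on even vertices so that none of its edges is parallel to an arc. *)
definition path_grid_graph :: "nat \<Rightarrow> mgraph" where
  "path_grid_graph n = ({..<4 * n * n},
     {{2 * grid_code n x, 2 * grid_code n y} |x y. x \<in> grid n \<and> y \<in> grid n \<and> grid_adj x y},
     successor_arcs (4 * n * n))"

lemma even_doubleton_neq_successor: "{2 * a, 2 * b} \<noteq> {v, Suc v}" for a b v :: nat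
  by (auto simp: doubleton_eq_iff) presburger+

lemma path_grid_edge_iff:
  assumes "x \<in> grid n" "y \<in> grid n"
  shows "{2 * grid_code n x, 2 * grid_code n y} \<in> snd (underlying (path_grid_graph n)) \<longleftrightarrow> grid_adj x y"
proof -
  let ?g = "\<lambda>x. 2 * grid_code n x"
  have inj: "inj_on ?g (grid n)"
    using inj_on_grid_code by (auto simp: inj_on_def)
  have "{?g x, ?g y} \<in> snd (underlying (path_grid_graph n)) \<longleftrightarrow>
      (\<exists>x' y'. {?g x, ?g y} = {?g x', ?g y'} \<and> x' \<in> grid n \<and> y' \<in> grid n \<and> grid_adj x' y')"
    using even_doubleton_neq_successor
    by (auto simp: path_grid_graph_def underlying_def successor_arcs_def)
  also have "\<dots> \<longleftrightarrow> grid_adj x y"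
  proof
    assume "\<exists>x' y'. {?g x, ?g y} = {?g x', ?g y'} \<and> x' \<in> grid n \<and> y' \<in> grid n \<and> grid_adj x' y'"
    then obtain x' y' where eq: "{?g x, ?g y} = {?g x', ?g y'}"
      and x'y': "x' \<in> grid n" "y' \<in> grid n" "grid_adj x' y'" by blast
    from eq have "?g x = ?g x' \<and> ?g y = ?g y' \<or> ?g x = ?g y' \<and> ?g y = ?g x'"
      by (simp add: doubleton_eq_iff)
    then have "x = x' \<and> y = y' \<or> x = y' \<and> y = x'"
      using inj_onD[OF inj] assms x'y'(1,2) by metis
    then show "grid_adj x y" using x'y'(3) grid_adj_sym by blast
  qed (use assms in blast)
  finally show ?thesis .
qed

lemma mixed_graph_path_grid_graph: "mixed_graph (path_grid_graph n)"
  unfolding mixed_graph_def path_grid_graph_def prod.case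
proof (intro conjI ballI)
  fix e assume "e \<in> {{2 * grid_code n x, 2 * grid_code n y} |x y. x \<in> grid n \<and> y \<in> grid n \<and> grid_adj x y}"
  then obtain x y where e: "e = {2 * grid_code n x, 2 * grid_code n y}" and xy: "x \<in> grid n" "y \<in> grid n"
    and "grid_adj x y" by blast
  then have "x \<noteq> y" using grid_adj_irrefl by blast
  then have "grid_code n x \<noteq> grid_code n y" using inj_on_grid_code xy by (meson inj_onD)
  then show "\<exists>u v. u \<noteq> v \<and> u \<in> {..<4 * n * n} \<and> v \<in> {..<4 * n * n} \<and> e = {u, v}"
    using e grid_code_less[OF xy(1)] grid_code_less[OF xy(2)]
    by (intro exI[of _ "2 * grid_code n x"] exI[of _ "2 * grid_code n y"]) auto
next
  have "successor_arcs (4 * n * n) \<subseteq> measure id"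
    by (auto simp: successor_arcs_def)
  then show "acyclic (successor_arcs (4 * n * n))"
    by (rule acyclic_subset[OF wf_acyclic[OF wf_measure]])
next
  fix a assume "a \<in> successor_arcs (4 * n * n)"
  then obtain v where "a = (v, Suc v)" by (auto simp: successor_arcs_def)
  then show "case a of (u, v) \<Rightarrow> u \<noteq> v \<and>
      {u, v} \<notin> {{2 * grid_code n x, 2 * grid_code n y} |x y. x \<in> grid n \<and> y \<in> grid n \<and> grid_adj x y}"
    using even_doubleton_neq_successor by (auto simp: eq_commute[of "{v, Suc v}"])
qed (auto simp: successor_arcs_def)

lemma underlying_tclosure_path_grid_graph:
  "underlying (tclosure (path_grid_graph n)) = complete_ugraph {..<4 * n * n}"
proof -
  let ?N = "4 * n * n"
  obtain E where G: "path_grid_graph n = ({..<?N}, E, successor_arcs ?N)"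
    by (simp add: path_grid_graph_def)
  have "E \<subseteq> snd (complete_ugraph {..<?N})"
    using mixed_graph_path_grid_graph[of n] by (simp add: G mixed_graph_def complete_ugraph_def) blast
  moreover have "{{u, v} |u v. (u, v) \<in> (successor_arcs ?N)\<^sup>+} = snd (complete_ugraph {..<?N})"
  proof (intro equalityI subsetI)
    fix e assume "e \<in> {{u, v} |u v. (u, v) \<in> (successor_arcs ?N)\<^sup>+}"
    then obtain u v where "e = {u, v}" "u < v" "v < ?N" by (auto simp: trancl_successor_arcs)
    then show "e \<in> snd (complete_ugraph {..<?N})"
      unfolding complete_ugraph_def snd_conv by (intro CollectI exI[of _ u] exI[of _ v]) auto
  next
    fix e assume "e \<in> snd (complete_ugraph {..<?N})"
    then obtain a b where "e = {a, b}" "a < ?N" "b < ?N" "a \<noteq> b"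
      by (auto simp: complete_ugraph_def)
    then show "e \<in> {{u, v} |u v. (u, v) \<in> (successor_arcs ?N)\<^sup>+}"
      by (simp only: doubleton_in_pairs_iff) (auto simp: trancl_successor_arcs)
  qed
  ultimately have "E \<union> {{u, v} |u v. (u, v) \<in> (successor_arcs ?N)\<^sup>+} = snd (complete_ugraph {..<?N})"
    by (simp add: Un_absorb1)
  then have "underlying (tclosure (path_grid_graph n)) = ({..<?N}, snd (complete_ugraph {..<?N}))"
    by (simp add: G underlying_tclosure)
  also have "\<dots> = complete_ugraph {..<?N}" by (simp add: complete_ugraph_def)
  finally show ?thesis .
qed

lemma embeds_grid_path_grid_graph:
  "embeds_grid n (\<lambda>x. 2 * grid_code n x) (underlying (path_grid_graph n))"
  unfolding embeds_grid_def adjacent_def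
proof (intro conjI ballI)
  show "inj_on (\<lambda>x. 2 * grid_code n x) (grid n)"
    using inj_on_grid_code by (auto simp: inj_on_def)
  show "(\<lambda>x. 2 * grid_code n x) ` grid n \<subseteq> fst (underlying (path_grid_graph n))"
  proof
    fix z assume "z \<in> (\<lambda>x. 2 * grid_code n x) ` grid n"
    then obtain x where "x \<in> grid n" "z = 2 * grid_code n x" by blast
    then show "z \<in> fst (underlying (path_grid_graph n))"
      using grid_code_less[of x n] by (simp add: path_grid_graph_def underlying_def)
  qed
qed (rule path_grid_edge_iff)

section \<open>Hubs over the grid\<close>

definition grid_hubs :: "nat \<Rightarrow> nat \<times> nat \<times> nat \<Rightarrow> nat set" where
  "grid_hubs n = (\<lambda>(s, i, j). {2 * n * n + i, 2 * n * n + n + j})"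

lemma grid_hubs_subset: "x \<in> grid n \<Longrightarrow> grid_hubs n x \<subseteq> {2 * n * n..<2 * n * n + 2 * n}"
  by (auto simp: grid_def grid_hubs_def)

lemma grid_code_less_hub: "x \<in> grid n \<Longrightarrow> h \<in> grid_hubs n y \<Longrightarrow> grid_code n x < h"
  using grid_code_less[of x n] by (auto simp: grid_hubs_def split: prod.splits)

lemma grid_adj_iff_common_hub:
  assumes "x \<in> grid n" "y \<in> grid n"
  shows "grid_adj x y \<longleftrightarrow> fst x \<noteq> fst y \<and> grid_hubs n x \<inter> grid_hubs n y \<noteq> {}"
  using assms by (auto simp: grid_def grid_hubs_def)

definition hub_arcs :: "nat \<Rightarrow> (nat \<times> nat) set" where
  "hub_arcs n = {(grid_code n x, h) |x h. x \<in> grid n \<and> fst x = 0 \<and> h \<in> grid_hubs n x}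
             \<union> {(h, grid_code n x) |x h. x \<in> grid n \<and> fst x = 1 \<and> h \<in> grid_hubs n x}"

lemma hub_arcsE:
  assumes "(a, b) \<in> hub_arcs n"
  obtains (out) x where "x \<in> grid n" "fst x = 0" "a = grid_code n x" "b \<in> grid_hubs n x"
    | (into) x where "x \<in> grid n" "fst x = 1" "a \<in> grid_hubs n x" "b = grid_code n x"
  using assms by (auto simp: hub_arcs_def)

lemma relcomp_hub_arcs:
  "hub_arcs n O hub_arcs n = {(grid_code n x, grid_code n y) |x y. x \<in> grid n \<and> y \<in> grid n
     \<and> fst x = 0 \<and> fst y = 1 \<and> grid_hubs n x \<inter> grid_hubs n y \<noteq> {}}"
proof (intro equalityI subrelI)
  fix a c assume "(a, c) \<in> hub_arcs n O hub_arcs n"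
  then obtain b where ab: "(a, b) \<in> hub_arcs n" and bc: "(b, c) \<in> hub_arcs n" by blast
  from ab show "(a, c) \<in> {(grid_code n x, grid_code n y) |x y. x \<in> grid n \<and> y \<in> grid n
     \<and> fst x = 0 \<and> fst y = 1 \<and> grid_hubs n x \<inter> grid_hubs n y \<noteq> {}}"
  proof (cases rule: hub_arcsE)
    case (out x)
    from bc show ?thesis
    proof (cases rule: hub_arcsE)
      case (out y)
      then show ?thesis using grid_code_less_hub[of y n b x] \<open>b \<in> grid_hubs n x\<close> by simp
    next
      case (into y)
      then show ?thesis using out by blast
    qed
  next
    case (into x)
    from bc show ?thesis
    proof (cases rule: hub_arcsE)
      case (out y)
      then have "x = y" using into inj_on_grid_code by (metis inj_onD)
      then show ?thesis using out into by simp
    next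
      case (into y)
      then show ?thesis using grid_code_less_hub[of x n b y] \<open>b = grid_code n x\<close> \<open>x \<in> grid n\<close> by simp
    qed
  qed
next
  fix a c assume "(a, c) \<in> {(grid_code n x, grid_code n y) |x y. x \<in> grid n \<and> y \<in> grid n
     \<and> fst x = 0 \<and> fst y = 1 \<and> grid_hubs n x \<inter> grid_hubs n y \<noteq> {}}"
  then obtain x y h where "a = grid_code n x" "c = grid_code n y" "x \<in> grid n" "y \<in> grid n"
    "fst x = 0" "fst y = 1" "h \<in> grid_hubs n x" "h \<in> grid_hubs n y" by blast
  then have "(a, h) \<in> hub_arcs n" "(h, c) \<in> hub_arcs n" unfolding hub_arcs_def by blast+
  then show "(a, c) \<in> hub_arcs n O hub_arcs n" by blast
qed

lemma trancl_hub_arcs: "(hub_arcs n)\<^sup>+ = hub_arcs n \<union> hub_arcs n O hub_arcs n"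
proof (rule trancl_eq_Un_relcomp)
  have no_arc: "(c, d) \<notin> hub_arcs n" if "y \<in> grid n" "fst y = 1" "c = grid_code n y" for c d y
  proof
    assume "(c, d) \<in> hub_arcs n"
    then show False
    proof (cases rule: hub_arcsE)
      case (out y')
      then have "y = y'" using that inj_on_grid_code by (metis inj_onD)
      then show False using out that by simp
    next
      case (into y')
      then show False using grid_code_less_hub[of y n c y'] that by simp
    qed
  qed
  have "(hub_arcs n O hub_arcs n) O hub_arcs n = {}"
  proof (rule equals0I)
    fix p assume "p \<in> (hub_arcs n O hub_arcs n) O hub_arcs n"
    then obtain a c d where "(a, c) \<in> hub_arcs n O hub_arcs n" "(c, d) \<in> hub_arcs n"
      by (cases p) blast
    moreover from this(1) obtain y where "y \<in> grid n" "fst y = 1" "c = grid_code n y"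
      unfolding relcomp_hub_arcs by blast
    ultimately show False using no_arc by blast
  qed
  then show "hub_arcs n O hub_arcs n O hub_arcs n = {}" by (simp add: O_assoc)
qed

lemma hub_arcs_between:
  assumes "(a, b) \<in> hub_arcs n"
  shows "a < 2 * n * n \<and> b \<in> {2 * n * n..<2 * n * n + 2 * n}
    \<or> a \<in> {2 * n * n..<2 * n * n + 2 * n} \<and> b < 2 * n * n"
  using assms
proof (cases rule: hub_arcsE)
  case (out x)
  then show ?thesis using grid_code_less[of x n] grid_hubs_subset[of x n] by auto
next
  case (into x)
  then show ?thesis using grid_code_less[of x n] grid_hubs_subset[of x n] by auto
qed

definition hub_grid_graph :: "nat \<Rightarrow> mgraph" where
  "hub_grid_graph n = ({..<2 * n * n + 2 * n},
     {{p, h} |p h. p < 2 * n * n \<and> h \<in> {2 * n * n..<2 * n * n + 2 * n}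
        \<and> (p, h) \<notin> hub_arcs n \<and> (h, p) \<notin> hub_arcs n},
     hub_arcs n)"

lemma mixed_graph_hub_grid_graph: "mixed_graph (hub_grid_graph n)"
  unfolding mixed_graph_def hub_grid_graph_def prod.case
proof (intro conjI ballI)
  show "hub_arcs n \<subseteq> {..<2 * n * n + 2 * n} \<times> {..<2 * n * n + 2 * n}"
  proof (rule subrelI)
    fix a b assume "(a, b) \<in> hub_arcs n"
    then show "(a, b) \<in> {..<2 * n * n + 2 * n} \<times> {..<2 * n * n + 2 * n}"
      using hub_arcs_between[of a b n] by auto
  qed
  have "(v, v) \<notin> hub_arcs n" for v
    using hub_arcs_between[of v v n] by auto
  moreover have "(v, v) \<notin> hub_arcs n O hub_arcs n" for v
  proof
    assume "(v, v) \<in> hub_arcs n O hub_arcs n"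
    then obtain x y where "(v, v) = (grid_code n x, grid_code n y)"
      and xy: "x \<in> grid n" "y \<in> grid n" "fst x = 0" "fst y = 1"
      unfolding relcomp_hub_arcs mem_Collect_eq by blast
    then have "x = y" using inj_onD[OF inj_on_grid_code] xy(1,2) by (metis prod.inject)
    then show False using xy by simp
  qed
  ultimately show "acyclic (hub_arcs n)" by (simp add: acyclic_def trancl_hub_arcs)
next
  fix a assume "a \<in> hub_arcs n"
  then obtain u v where a: "a = (u, v)" "(u, v) \<in> hub_arcs n" by (cases a) auto
  then have "u \<noteq> v" using hub_arcs_between[of u v n] by auto
  moreover have "{u, v} \<notin> {{p, h} |p h. p < 2 * n * n \<and> h \<in> {2 * n * n..<2 * n * n + 2 * n}
      \<and> (p, h) \<notin> hub_arcs n \<and> (h, p) \<notin> hub_arcs n}"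
  proof
    assume "{u, v} \<in> {{p, h} |p h. p < 2 * n * n \<and> h \<in> {2 * n * n..<2 * n * n + 2 * n}
      \<and> (p, h) \<notin> hub_arcs n \<and> (h, p) \<notin> hub_arcs n}"
    then obtain p h where "{u, v} = {p, h}" "(p, h) \<notin> hub_arcs n" "(h, p) \<notin> hub_arcs n" by blast
    then show False using a(2) by (auto simp: doubleton_eq_iff)
  qed
  ultimately show "case a of (u, v) \<Rightarrow> u \<noteq> v \<and> {u, v} \<notin> {{p, h} |p h. p < 2 * n * n
      \<and> h \<in> {2 * n * n..<2 * n * n + 2 * n} \<and> (p, h) \<notin> hub_arcs n \<and> (h, p) \<notin> hub_arcs n}"
    unfolding a(1) by simp
next
  fix e assume "e \<in> {{p, h} |p h. p < 2 * n * n \<and> h \<in> {2 * n * n..<2 * n * n + 2 * n}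
      \<and> (p, h) \<notin> hub_arcs n \<and> (h, p) \<notin> hub_arcs n}"
  then obtain p h where "e = {p, h}" "p < 2 * n * n" "h \<in> {2 * n * n..<2 * n * n + 2 * n}" by blast
  then show "\<exists>u v. u \<noteq> v \<and> u \<in> {..<2 * n * n + 2 * n} \<and> v \<in> {..<2 * n * n + 2 * n} \<and> e = {u, v}"
    by (intro exI[of _ p] exI[of _ h]) auto
qed auto

lemma underlying_hub_grid_graph:
  "underlying (hub_grid_graph n) = complete_bipartite {..<2 * n * n} {2 * n * n..<2 * n * n + 2 * n}"
proof -
  let ?P = "{..<2 * n * n}" and ?Q = "{2 * n * n..<2 * n * n + 2 * n}"
  let ?E = "{{p, h} |p h. p < 2 * n * n \<and> h \<in> ?Q \<and> (p, h) \<notin> hub_arcs n \<and> (h, p) \<notin> hub_arcs n}"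
  have "?E \<union> {{u, v} |u v. (u, v) \<in> hub_arcs n} = {{a, b} |a b. a \<in> ?P \<and> b \<in> ?Q}"
  proof (intro equalityI subsetI)
    fix e assume "e \<in> ?E \<union> {{u, v} |u v. (u, v) \<in> hub_arcs n}"
    then consider "e \<in> ?E" | u v where "e = {u, v}" "(u, v) \<in> hub_arcs n" by blast
    then show "e \<in> {{a, b} |a b. a \<in> ?P \<and> b \<in> ?Q}"
    proof cases
      case 1
      then show ?thesis by auto
    next
      case (2 u v)
      then have "u \<in> ?P \<and> v \<in> ?Q \<or> v \<in> ?P \<and> u \<in> ?Q" using hub_arcs_between[of u v n] by auto
      moreover have "e = {v, u}" using 2(1) by (simp add: insert_commute)
      ultimately show ?thesis using 2(1) by blast
    qed
  next
    fix e assume "e \<in> {{a, b} |a b. a \<in> ?P \<and> b \<in> ?Q}"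
    then obtain a b where e: "e = {a, b}" "a \<in> ?P" "b \<in> ?Q" by blast
    show "e \<in> ?E \<union> {{u, v} |u v. (u, v) \<in> hub_arcs n}"
    proof (cases "(a, b) \<in> hub_arcs n \<or> (b, a) \<in> hub_arcs n")
      case True
      moreover have "e = {b, a}" using e(1) by (simp add: insert_commute)
      ultimately show ?thesis using e(1) by blast
    next
      case False
      then show ?thesis using e by auto
    qed
  qed
  moreover have "{..<2 * n * n + 2 * n} = ?P \<union> ?Q" by auto
  ultimately show ?thesis
    by (simp add: hub_grid_graph_def underlying_def complete_bipartite_def)
qed

lemma grid_code_pair_in_relcomp_hub_arcs:
  assumes "x \<in> grid n" "y \<in> grid n"
  shows "(grid_code n x, grid_code n y) \<in> hub_arcs n O hub_arcs n
    \<longleftrightarrow> fst x = 0 \<and> fst y = 1 \<and> grid_hubs n x \<inter> grid_hubs n y \<noteq> {}"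
proof
  assume "(grid_code n x, grid_code n y) \<in> hub_arcs n O hub_arcs n"
  then obtain x' y' where "grid_code n x = grid_code n x'" "grid_code n y = grid_code n y'"
    and x'y': "x' \<in> grid n" "y' \<in> grid n" "fst x' = 0" "fst y' = 1"
      "grid_hubs n x' \<inter> grid_hubs n y' \<noteq> {}"
    unfolding relcomp_hub_arcs mem_Collect_eq prod.inject by blast
  then have "x = x'" "y = y'" using inj_onD[OF inj_on_grid_code] assms by metis+
  then show "fst x = 0 \<and> fst y = 1 \<and> grid_hubs n x \<inter> grid_hubs n y \<noteq> {}" using x'y' by simp
qed (use assms in \<open>unfold relcomp_hub_arcs, blast\<close>)

lemma hub_grid_closure_edge_iff:
  assumes "x \<in> grid n" "y \<in> grid n"
  shows "{grid_code n x, grid_code n y} \<in> snd (underlying (tclosure (hub_grid_graph n)))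
    \<longleftrightarrow> grid_adj x y"
proof -
  let ?c = "grid_code n"
  have core: "?c x < 2 * n * n" "?c y < 2 * n * n" using assms grid_code_less by auto
  have "{?c x, ?c y} \<notin> fst (snd (hub_grid_graph n))"
  proof
    assume "{?c x, ?c y} \<in> fst (snd (hub_grid_graph n))"
    then obtain p h where "{?c x, ?c y} = {p, h}" "2 * n * n \<le> h" by (auto simp: hub_grid_graph_def)
    then show False using core by (auto simp: doubleton_eq_iff)
  qed
  moreover have "(?c x, ?c y) \<notin> hub_arcs n" "(?c y, ?c x) \<notin> hub_arcs n"
    using hub_arcs_between[of "?c x" "?c y" n] hub_arcs_between[of "?c y" "?c x" n] core by auto
  moreover have "snd (underlying (tclosure (hub_grid_graph n)))
      = fst (snd (hub_grid_graph n)) \<union> {{u, v} |u v. (u, v) \<in> (hub_arcs n)\<^sup>+}"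
    by (simp add: hub_grid_graph_def underlying_tclosure)
  ultimately have "{?c x, ?c y} \<in> snd (underlying (tclosure (hub_grid_graph n)))
      \<longleftrightarrow> (?c x, ?c y) \<in> hub_arcs n O hub_arcs n \<or> (?c y, ?c x) \<in> hub_arcs n O hub_arcs n"
    by (simp only: Un_iff doubleton_in_pairs_iff) (simp add: trancl_hub_arcs)
  also have "\<dots> \<longleftrightarrow> (fst x = 0 \<and> fst y = 1 \<or> fst y = 0 \<and> fst x = 1)
      \<and> grid_hubs n x \<inter> grid_hubs n y \<noteq> {}"
    using assms by (auto simp: grid_code_pair_in_relcomp_hub_arcs Int_commute)
  also have "\<dots> \<longleftrightarrow> grid_adj x y"
    using assms grid_adj_iff_common_hub[OF assms] by (auto simp: grid_def)
  finally show ?thesis .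
qed

lemma embeds_grid_hub_grid_closure:
  "embeds_grid n (grid_code n) (underlying (tclosure (hub_grid_graph n)))"
  unfolding embeds_grid_def adjacent_def
proof (intro conjI ballI)
  show "grid_code n ` grid n \<subseteq> fst (underlying (tclosure (hub_grid_graph n)))"
  proof
    fix z assume "z \<in> grid_code n ` grid n"
    then obtain x where "x \<in> grid n" "z = grid_code n x" by blast
    then show "z \<in> fst (underlying (tclosure (hub_grid_graph n)))"
      using grid_code_less[of x n] by (simp add: hub_grid_graph_def underlying_tclosure)
  qed
qed (simp_all add: inj_on_grid_code hub_grid_closure_edge_iff)

lemma path_grid_graph_bounds:
  assumes "2 \<le> m"
  shows "nd (underlying (tclosure (path_grid_graph (2 * m + 2)))) \<le> 2"
    and "cw (underlying (tclosure (path_grid_graph (2 * m + 2)))) \<le> 2"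
    and "m < nd (underlying (path_grid_graph (2 * m + 2)))"
    and "m \<le> cw (underlying (path_grid_graph (2 * m + 2)))"
proof -
  let ?G = "path_grid_graph (2 * m + 2)"
  show "nd (underlying (tclosure ?G)) \<le> 2"
    unfolding underlying_tclosure_path_grid_graph by (rule order_trans[OF nd_complete_ugraph]) simp
  show "cw (underlying (tclosure ?G)) \<le> 2"
    by (simp add: underlying_tclosure_path_grid_graph cw_complete_ugraph)
  have simple: "simple_ugraph (underlying ?G)"
    by (rule simple_ugraph_underlying(1)[OF mixed_graph_path_grid_graph])
  then have "2 * m + 2 \<le> nd (underlying ?G)"
    by (intro nd_ge_of_embeds_grid[OF _ embeds_grid_path_grid_graph]) (use assms in \<open>auto simp: simple_ugraph_def\<close>)
  then show "m < nd (underlying ?G)" by simp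
  show "m \<le> cw (underlying ?G)"
    by (rule cw_ge_of_embeds_grid[OF simple embeds_grid_path_grid_graph assms])
qed

lemma hub_grid_graph_bounds:
  assumes "2 \<le> m"
  shows "nd (underlying (hub_grid_graph (2 * m + 2))) \<le> 2"
    and "cw (underlying (hub_grid_graph (2 * m + 2))) \<le> 2"
    and "m < nd (underlying (tclosure (hub_grid_graph (2 * m + 2))))"
    and "m \<le> cw (underlying (tclosure (hub_grid_graph (2 * m + 2))))"
proof -
  let ?n = "2 * m + 2"
  let ?G = "hub_grid_graph ?n"
  have "2 \<le> card {..<2 * ?n * ?n}" by simp
  then show "nd (underlying ?G) \<le> 2"
    unfolding underlying_hub_grid_graph by (intro nd_complete_bipartite) auto
  show "cw (underlying ?G) \<le> 2"
    unfolding underlying_hub_grid_graph by (intro cw_complete_bipartite) auto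
  have simple: "simple_ugraph (underlying (tclosure ?G))"
    by (rule simple_ugraph_underlying(2)[OF mixed_graph_hub_grid_graph])
  then have "?n \<le> nd (underlying (tclosure ?G))"
    by (intro nd_ge_of_embeds_grid[OF _ embeds_grid_hub_grid_closure]) (use assms in \<open>auto simp: simple_ugraph_def\<close>)
  then show "m < nd (underlying (tclosure ?G))" by simp
  show "m \<le> cw (underlying (tclosure ?G))"
    by (rule cw_ge_of_embeds_grid[OF simple embeds_grid_hub_grid_closure assms])
qed

lemma not_bounds_if_unbounded_family:
  assumes "\<And>c. mixed_graph (F c)" "\<And>c. \<alpha> (F c) \<le> b" "\<And>c. c < \<beta> (F c)"
  shows "\<not> bounds \<alpha> \<beta>"
proof
  assume "bounds \<alpha> \<beta>"
  then obtain f where f: "\<And>G. mixed_graph G \<Longrightarrow> \<beta> G \<le> f (\<alpha> G)" by (auto simp: bounds_def)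
  define c where "c = Max (f ` {..b})"
  have "\<beta> (F c) \<le> f (\<alpha> (F c))" using f assms(1) .
  also have "\<dots> \<le> c" unfolding c_def using assms(2) by (intro Max_ge) auto
  finally show False using assms(3)[of c] by simp
qed

theorem mainTheorem19:
  shows "incomparable (\<lambda>G. nd (underlying G)) (\<lambda>G. nd (underlying (tclosure G)))
       \<and> incomparable (\<lambda>G. cw (underlying G)) (\<lambda>G. cw (underlying (tclosure G)))"
proof -
  define P where "P c = path_grid_graph (2 * (c + 2) + 2)" for c
  define H where "H c = hub_grid_graph (2 * (c + 2) + 2)" for c
  have P: "mixed_graph (P c)" "nd (underlying (tclosure (P c))) \<le> 2" "cw (underlying (tclosure (P c))) \<le> 2"
    "c < nd (underlying (P c))" "c < cw (underlying (P c))" for c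
    using path_grid_graph_bounds[of "c + 2"] mixed_graph_path_grid_graph by (auto simp: P_def)
  have H: "mixed_graph (H c)" "nd (underlying (H c)) \<le> 2" "cw (underlying (H c)) \<le> 2"
    "c < nd (underlying (tclosure (H c)))" "c < cw (underlying (tclosure (H c)))" for c
    using hub_grid_graph_bounds[of "c + 2"] mixed_graph_hub_grid_graph by (auto simp: H_def)
  have "\<not> bounds (\<lambda>G. nd (underlying G)) (\<lambda>G. nd (underlying (tclosure G)))"
    by (rule not_bounds_if_unbounded_family[of H]) (rule H)+
  moreover have "\<not> bounds (\<lambda>G. cw (underlying G)) (\<lambda>G. cw (underlying (tclosure G)))"
    by (rule not_bounds_if_unbounded_family[of H]) (rule H)+
  moreover have "\<not> bounds (\<lambda>G. nd (underlying (tclosure G))) (\<lambda>G. nd (underlying G))"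
    by (rule not_bounds_if_unbounded_family[of P]) (rule P)+
  moreover have "\<not> bounds (\<lambda>G. cw (underlying (tclosure G))) (\<lambda>G. cw (underlying G))"
    by (rule not_bounds_if_unbounded_family[of P]) (rule P)+
  ultimately show ?thesis by (simp add: incomparable_def)
qed

end
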